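(* Let $(S,T,E)$ be a $P$-Petri net with control-states with $\|T\|_\infty>0$, let $\Theta$ be a multicycle of it, let $Q\subseteq P$, let $d=|P|$, and let $k$ be a number with $k>\|\Delta(\Theta)|_Q\|_1(1+2|S|\|T\|_\infty)^{d(d+1)}$. Then there exists a multicycle $\Theta'$ such that: (i) for every $p\in P$: $\Delta(\Theta')(p)\leq 0$ if $\Delta(\Theta)(p)\leq0$; $\Delta(\Theta')(p)<0$ if $\Delta(\Theta)(p)\leq -k$; $\Delta(\Theta')(p)\geq0$ if $\Delta(\Theta)(p)\geq 0$; $\Delta(\Theta')(p)>0$ if $\Delta(\Theta)(p)\geq k$; (ii) $\Delta(\Theta')(q)=0$ for every $q\in Q$; (iii) for every edge $e\in E$, $\#\Theta'(e)>0$ if $\#\Theta(e)\geq k$; (iv) $|\Theta'|\leq(|E|+d)(1+2|S|\|T\|_\infty)^{d(d+1)}$.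
   Context: A $P$-configuration is a map in $\mathbb{N}^P$; a $P$-transition is a pair $t=(\alpha_t,\beta_t)$ of $P$-configurations; a $P$-Petri net $T$ is a finite set of $P$-transitions, and $\|T\|_\infty$ is the maximum entry among all $\alpha_t,\beta_t$, $t\in T$. A $P$-Petri net with control-states is a triple $(S,T,E)$ with $S$ a nonempty finite set of control-states and $E\subseteq S\times T\times S$. A path from $s$ to $s'$ is a word $e_1\cdots e_k$ of edges with control-states $s_0=s,\dots,s_k=s'$ and $e_j=(s_{j-1},t_j,s_j)$; its length is $k$; it is a cycle if $s=s'$. A multicycle $\Theta$ is a finite sequence $\theta_1,\dots,\theta_m$ of cycles, with length $|\Theta|=\sum_j|\theta_j|$. The Parikh image $\#\pi\in\mathbb{N}^E$ of a word of edges counts occurrences of each edge, and $\#\Theta=\sum_j\#\theta_j$. The displacement of a transition is $\Delta(t)=\beta_t-\alpha_t\in\mathbb{Z}^P$, of an edge $(s,t,s')$ is $\Delta(t)$, of a word of edges is the sum of displacements of its edges, and $\Delta(\Theta)=\sum_j\Delta(\theta_j)$. For $a\in\mathbb{Z}^P$, $\|a\|_1=\sum_p|a(p)|$ and $a|_Q(q)=a(q)$ for $q\in Q$ (with $Q\subseteq P$). *)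

theory Defs
  imports Main "HOL-Library.Cardinality"
begin

text \<open>Places P are the elements of a finite type 'p. A P-configuration is a map 'p => nat;
  a transition is a pair (alpha, beta) of configurations.\<close>

type_synonym 'p conf = "'p \<Rightarrow> nat"
type_synonym 'p transition = "'p conf \<times> 'p conf"
type_synonym ('s, 'p) edge = "'s \<times> 'p transition \<times> 's"

definition norm_inf :: "'p::finite transition set \<Rightarrow> nat" where
  "norm_inf T = Max ({0} \<union> {fst t p | t p. t \<in> T} \<union> {snd t p | t p. t \<in> T})"

definition petri_cs :: "'s set \<Rightarrow> 'p transition set \<Rightarrow> ('s, 'p) edge set \<Rightarrow> bool" where
  "petri_cs S T E \<longleftrightarrow> finite S \<and> S \<noteq> {} \<and> finite T \<and> E \<subseteq> S \<times> T \<times> S"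

fun is_path :: "'s set \<Rightarrow> ('s, 'p) edge set \<Rightarrow> 's \<Rightarrow> ('s, 'p) edge list \<Rightarrow> 's \<Rightarrow> bool" where
  "is_path S E s [] s' \<longleftrightarrow> s \<in> S \<and> s = s'"
| "is_path S E s (e # es) s' \<longleftrightarrow> e \<in> E \<and> fst e = s \<and> s \<in> S \<and> is_path S E (snd (snd e)) es s'"

definition is_cycle :: "'s set \<Rightarrow> ('s, 'p) edge set \<Rightarrow> ('s, 'p) edge list \<Rightarrow> bool" where
  "is_cycle S E \<theta> \<longleftrightarrow> (\<exists>s. is_path S E s \<theta> s)"

definition is_multicycle :: "'s set \<Rightarrow> ('s, 'p) edge set \<Rightarrow> ('s, 'p) edge list list \<Rightarrow> bool" where
  "is_multicycle S E \<Theta> \<longleftrightarrow> (\<forall>\<theta> \<in> set \<Theta>. is_cycle S E \<theta>)"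

definition mc_length :: "('s, 'p) edge list list \<Rightarrow> nat" where
  "mc_length \<Theta> = (\<Sum>\<theta>\<leftarrow>\<Theta>. length \<theta>)"

definition mc_parikh :: "('s, 'p) edge list list \<Rightarrow> ('s, 'p) edge \<Rightarrow> nat" where
  "mc_parikh \<Theta> e = (\<Sum>\<theta>\<leftarrow>\<Theta>. count_list \<theta> e)"

definition delta_trans :: "'p transition \<Rightarrow> 'p \<Rightarrow> int" where
  "delta_trans t p = int (snd t p) - int (fst t p)"

definition delta_edge :: "('s, 'p) edge \<Rightarrow> 'p \<Rightarrow> int" where
  "delta_edge e = delta_trans (fst (snd e))"

definition delta_word :: "('s, 'p) edge list \<Rightarrow> 'p \<Rightarrow> int" where
  "delta_word es p = (\<Sum>e\<leftarrow>es. delta_edge e p)"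

definition delta_mc :: "('s, 'p) edge list list \<Rightarrow> 'p \<Rightarrow> int" where
  "delta_mc \<Theta> p = (\<Sum>\<theta>\<leftarrow>\<Theta>. delta_word \<theta> p)"

definition norm1_restr :: "('p \<Rightarrow> int) \<Rightarrow> 'p set \<Rightarrow> int" where
  "norm1_restr a Q = (\<Sum>q\<in>Q. \<bar>a q\<bar>)"

end

theory Submission
  imports Defs Complex_Main "HOL-Library.FuncSet" "HOL-Library.Multiset" "HOL-Library.Disjoint_Sets"
begin

text \<open>Split \<open>\<Theta>\<close> into cycles of length at most \<open>|S|\<close>; their displacements are
  integer vectors of sup-norm at most \<open>M = |S| \<parallel>T\<parallel>\<^sub>\<infinity>\<close>. Adding \<open>|\<Delta>(\<Theta>)(p)|\<close> copies of the unit
  vector \<open>-sgn(\<Delta>(\<Theta>)(p)) e\<^sub>p\<close> for every place \<open>p\<close> yields a zero-sum family, which a Steinitz-type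
  argument partitions into zero-sum blocks of at most \<open>(2dM + 1)\<^sup>d\<close> vectors. The cycles of a block
  form a multicycle whose displacement is sign-compatible with \<open>\<Delta>(\<Theta>)\<close>; since these displacements
  add up to \<open>\<Delta>(\<Theta>)\<close>, at most \<open>\<parallel>\<Delta>(\<Theta>)|\<^sub>Q\<parallel>\<^sub>1\<close> blocks move a place of \<open>Q\<close>. Every block contributes
  at most \<open>X = (1 + 2|S| \<parallel>T\<parallel>\<^sub>\<infinity>)\<^bsup>d(d+1)\<^esup>\<close> to each coordinate of the displacement and of the
  Parikh image, so for every place with \<open>|\<Delta>(\<Theta>)(p)| \<ge> k\<close> and every edge used \<open>k\<close> times some block
  avoiding \<open>Q\<close> contributes to it. One such block per place and per edge gives \<open>\<Theta>'\<close>.\<close>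

section \<open>Zero-sum subfamilies of bounded integer vectors\<close>

lemma exists_nontrivial_linear_dependence:
  fixes c :: "'k \<Rightarrow> 'i \<Rightarrow> real"
  assumes "finite K" "finite F" "card K < card F"
  shows "\<exists>\<nu>. (\<forall>i. i \<notin> F \<longrightarrow> \<nu> i = 0) \<and> (\<exists>i\<in>F. \<nu> i \<noteq> 0) \<and>
             (\<forall>k\<in>K. (\<Sum>i\<in>F. \<nu> i * c k i) = 0)"
  using assms
proof (induction K arbitrary: F c rule: finite_induct)
  case empty
  then obtain i0 where "i0 \<in> F" by (metis card.empty ex_in_conv less_irrefl)
  then show ?case by (intro exI[of _ "\<lambda>i. if i = i0 then 1 else 0"]) auto
next
  case (insert k K)
  show ?case
  proof (cases "\<forall>i\<in>F. c k i = 0")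
    case True
    from insert have "card K < card F" by simp
    with insert.IH insert.prems(1) obtain \<nu> where "\<forall>i. i \<notin> F \<longrightarrow> \<nu> i = 0" "\<exists>i\<in>F. \<nu> i \<noteq> 0"
      "\<forall>k\<in>K. (\<Sum>i\<in>F. \<nu> i * c k i) = 0" by blast
    with True show ?thesis by (intro exI[of _ \<nu>]) auto
  next
    case False
    then obtain i0 where i0: "i0 \<in> F" "c k i0 \<noteq> 0" by blast
    \<comment> \<open>Gaussian elimination with pivot \<open>c k i0\<close>: solve the remaining equations on \<open>F - {i0}\<close>
      and choose the weight of \<open>i0\<close> to satisfy equation \<open>k\<close>.\<close>
    define F' where "F' = F - {i0}"
    define c' where "c' = (\<lambda>k' i. c k' i - c k' i0 * c k i / c k i0)"
    have "finite F'" "card K < card F'"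
      using insert i0 by (simp_all add: F'_def card_Diff_singleton)
    with insert.IH obtain \<nu>' where \<nu>': "\<forall>i. i \<notin> F' \<longrightarrow> \<nu>' i = 0" "\<exists>i\<in>F'. \<nu>' i \<noteq> 0"
       "\<forall>k\<in>K. (\<Sum>i\<in>F'. \<nu>' i * c' k i) = 0" by blast
    define a where "a = - (\<Sum>j\<in>F'. \<nu>' j * c k j) / c k i0"
    define \<nu> where "\<nu> = (\<lambda>i. if i = i0 then a else \<nu>' i)"
    have split: "(\<Sum>i\<in>F. \<nu> i * g i) = a * g i0 + (\<Sum>i\<in>F'. \<nu>' i * g i)" for g
    proof -
      have "(\<Sum>i\<in>F. \<nu> i * g i) = \<nu> i0 * g i0 + (\<Sum>i\<in>F'. \<nu> i * g i)"
        using insert.prems i0 by (simp add: F'_def sum.remove)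
      also have "(\<Sum>i\<in>F'. \<nu> i * g i) = (\<Sum>i\<in>F'. \<nu>' i * g i)"
        by (rule sum.cong) (auto simp: \<nu>_def F'_def)
      finally show ?thesis by (simp add: \<nu>_def)
    qed
    have "(\<Sum>i\<in>F. \<nu> i * c k' i) = 0" if "k' \<in> K" for k'
    proof -
      have "0 = (\<Sum>i\<in>F'. \<nu>' i * c' k' i)" using \<nu>'(3) that by simp
      also have "\<dots> = (\<Sum>i\<in>F'. \<nu>' i * c k' i) - (c k' i0 / c k i0) * (\<Sum>i\<in>F'. \<nu>' i * c k i)"
        by (simp add: c'_def sum_subtractf sum_distrib_left algebra_simps)
      also have "\<dots> = (\<Sum>i\<in>F'. \<nu>' i * c k' i) + a * c k' i0"
        using i0 by (simp add: a_def field_simps)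
      finally show ?thesis unfolding split by simp
    qed
    moreover have "(\<Sum>i\<in>F. \<nu> i * c k i) = 0"
      unfolding split using i0 by (simp add: a_def)
    moreover have "\<forall>i. i \<notin> F \<longrightarrow> \<nu> i = 0" "\<exists>i\<in>F. \<nu> i \<noteq> 0"
      using \<nu>'(1,2) i0 by (auto simp: \<nu>_def F'_def)
    ultimately show ?thesis by (intro exI[of _ \<nu>]) auto
  qed
qed

definition zero_sum_weights :: "'i set \<Rightarrow> ('i \<Rightarrow> 'p \<Rightarrow> real) \<Rightarrow> ('i \<Rightarrow> real) \<Rightarrow> real \<Rightarrow> bool" where
  "zero_sum_weights A v \<mu> s \<longleftrightarrow>
     (\<forall>i\<in>A. 0 \<le> \<mu> i \<and> \<mu> i \<le> 1) \<and> (\<forall>p. (\<Sum>i\<in>A. \<mu> i * v i p) = 0) \<and> (\<Sum>i\<in>A. \<mu> i) = s"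

definition fractional :: "'i set \<Rightarrow> ('i \<Rightarrow> real) \<Rightarrow> 'i set" where
  "fractional A \<mu> = {i\<in>A. 0 < \<mu> i \<and> \<mu> i < 1}"

lemma exists_step_to_box_boundary:
  fixes \<mu> \<nu> :: "'i \<Rightarrow> real"
  assumes fin: "finite F" and inside: "\<forall>i\<in>F. 0 < \<mu> i \<and> \<mu> i < 1" and nz: "\<exists>i\<in>F. \<nu> i \<noteq> 0"
  shows "\<exists>t>0. (\<forall>i\<in>F. 0 \<le> \<mu> i + t * \<nu> i \<and> \<mu> i + t * \<nu> i \<le> 1) \<and>
               (\<exists>i0\<in>F. \<mu> i0 + t * \<nu> i0 = 0 \<or> \<mu> i0 + t * \<nu> i0 = 1)"
proof -
  define step where "step i = (if \<nu> i > 0 then (1 - \<mu> i) / \<nu> i else \<mu> i / (- \<nu> i))" for i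
  define steps where "steps = step ` {i\<in>F. \<nu> i \<noteq> 0}"
  define t where "t = Min steps"
  have fin_steps: "finite steps" and ne_steps: "steps \<noteq> {}"
    using fin nz by (auto simp: steps_def)
  have t_le: "t \<le> step i" if "i \<in> F" "\<nu> i \<noteq> 0" for i
    unfolding t_def using that fin_steps by (auto simp: steps_def)
  obtain i0 where i0: "i0 \<in> F" "\<nu> i0 \<noteq> 0" "t = step i0"
    using Min_in[OF fin_steps ne_steps] by (auto simp: steps_def t_def)
  have t_pos: "t > 0" using i0 inside by (auto simp: step_def divide_pos_neg)
  have "0 \<le> \<mu> i + t * \<nu> i \<and> \<mu> i + t * \<nu> i \<le> 1" if "i \<in> F" for i
  proof (cases "\<nu> i = 0")
    case False
    with that have "t \<le> step i" "0 < \<mu> i" "\<mu> i < 1" using t_le inside by auto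
    moreover have "\<not> 0 < \<nu> i \<Longrightarrow> t * \<nu> i \<le> 0" using t_pos by (simp add: mult_nonneg_nonpos)
    ultimately show ?thesis using False t_pos
      by (cases "\<nu> i > 0") (auto simp: step_def field_simps)
  qed (use that inside in auto)
  moreover have "\<mu> i0 + t * \<nu> i0 = 0 \<or> \<mu> i0 + t * \<nu> i0 = 1"
    using i0 by (cases "\<nu> i0 > 0") (auto simp: step_def)
  ultimately show ?thesis using t_pos i0(1) by blast
qed

lemma zero_sum_weights_reduce_fractional:
  fixes v :: "'i \<Rightarrow> 'p::finite \<Rightarrow> real"
  assumes fin: "finite A" and w: "zero_sum_weights A v \<mu> s"
    and many: "card (fractional A \<mu>) > CARD('p) + 1"
  shows "\<exists>\<mu>'. zero_sum_weights A v \<mu>' s \<and> card (fractional A \<mu>') < card (fractional A \<mu>)"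
proof -
  define F where "F = fractional A \<mu>"
  have FA: "F \<subseteq> A" and fin_F: "finite F" using fin by (auto simp: F_def fractional_def)
  have inside: "\<forall>i\<in>F. 0 < \<mu> i \<and> \<mu> i < 1" by (auto simp: F_def fractional_def)
  \<comment> \<open>More unknowns than the \<open>CARD('p) + 1\<close> equations (one per place, one for the total mass)
    give a direction along which all equations stay satisfied.\<close>
  define c where "c k i = (case k of None \<Rightarrow> 1 | Some p \<Rightarrow> v i p)" for k i
  have "card (UNIV :: 'p option set) < card F" using many by (simp add: F_def)
  from exists_nontrivial_linear_dependence[OF _ fin_F this, of c]
  obtain \<nu> where \<nu>_out: "\<forall>i. i \<notin> F \<longrightarrow> \<nu> i = 0" and \<nu>_nz: "\<exists>i\<in>F. \<nu> i \<noteq> 0"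
    and \<nu>_eqs: "\<forall>k. (\<Sum>i\<in>F. \<nu> i * c k i) = 0" by auto
  obtain t i0 where t: "\<forall>i\<in>F. 0 \<le> \<mu> i + t * \<nu> i \<and> \<mu> i + t * \<nu> i \<le> 1"
    and i0: "i0 \<in> F" "\<mu> i0 + t * \<nu> i0 = 0 \<or> \<mu> i0 + t * \<nu> i0 = 1"
    using exists_step_to_box_boundary[OF fin_F inside \<nu>_nz] by blast
  define \<mu>' where "\<mu>' i = \<mu> i + t * \<nu> i" for i
  have "(\<Sum>i\<in>A. \<mu>' i * c k i) = (\<Sum>i\<in>A. \<mu> i * c k i)" for k
  proof -
    have "(\<Sum>i\<in>A. \<nu> i * c k i) = (\<Sum>i\<in>F. \<nu> i * c k i)"
      by (rule sum.mono_neutral_right[OF fin FA]) (use \<nu>_out in auto)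
    then show ?thesis using \<nu>_eqs
      by (simp add: \<mu>'_def algebra_simps sum.distrib flip: sum_distrib_left)
  qed
  from this[of None] this[of "Some _"] have "zero_sum_weights A v \<mu>' s"
    using w t \<nu>_out by (auto simp: zero_sum_weights_def c_def \<mu>'_def)
  moreover have "fractional A \<mu>' \<subseteq> F - {i0}"
    using \<nu>_out i0(2) by (auto simp: fractional_def F_def \<mu>'_def)
  then have "card (fractional A \<mu>') < card F"
    using i0(1) fin_F by (meson card_Diff1_less card_mono finite_Diff le_less_trans)
  ultimately show ?thesis unfolding F_def by blast
qed

lemma zero_sum_weights_few_fractional:
  fixes v :: "'i \<Rightarrow> 'p::finite \<Rightarrow> real"
  assumes "finite A" "zero_sum_weights A v \<mu> s"
  shows "\<exists>\<mu>'. zero_sum_weights A v \<mu>' s \<and> card (fractional A \<mu>') \<le> CARD('p) + 1"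
  using assms(2)
proof (induction "card (fractional A \<mu>)" arbitrary: \<mu> rule: less_induct)
  case less
  then show ?case
    using zero_sum_weights_reduce_fractional[OF assms(1) less.prems] less.hyps
    by (meson not_le)
qed

lemma zero_sum_weights_scale:
  assumes "zero_sum_weights A v \<mu> s" "0 \<le> r" "r \<le> 1"
  shows "zero_sum_weights A v (\<lambda>i. r * \<mu> i) (r * s)"
  using assms by (auto simp: zero_sum_weights_def mult_le_one mult.assoc simp flip: sum_distrib_left)

text \<open>The invariant of Grinberg and Sevast'yanov's proof of the Steinitz lemma.\<close>
definition balanced :: "'i set \<Rightarrow> ('i \<Rightarrow> 'p::finite \<Rightarrow> real) \<Rightarrow> bool" where
  "balanced A v \<longleftrightarrow>
     card A \<le> CARD('p) \<or> (\<exists>\<mu>. zero_sum_weights A v \<mu> (real (card A) - real CARD('p)))"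

lemma balanced_if_zero_sum:
  fixes v :: "'i \<Rightarrow> 'p::finite \<Rightarrow> real"
  assumes "finite A" "\<forall>p. (\<Sum>i\<in>A. v i p) = 0"
  shows "balanced A v"
proof (cases "card A \<le> CARD('p)")
  case False
  define n d where "n = real (card A)" and "d = real CARD('p)"
  have "d < n" "0 \<le> d" using False by (simp_all add: n_def d_def)
  moreover have "zero_sum_weights A v (\<lambda>_. 1) n"
    using assms by (simp add: zero_sum_weights_def n_def)
  ultimately have "zero_sum_weights A v (\<lambda>_. (n - d) / n * 1) ((n - d) / n * n)"
    by (intro zero_sum_weights_scale) auto
  with \<open>d < n\<close> \<open>0 \<le> d\<close> show ?thesis unfolding balanced_def n_def d_def by auto
qed (simp add: balanced_def)

lemma exists_zero_weight:
  fixes \<mu> :: "'i \<Rightarrow> real"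
  assumes fin: "finite A" and box: "\<forall>i\<in>A. 0 \<le> \<mu> i \<and> \<mu> i \<le> 1"
    and few: "card (fractional A \<mu>) \<le> m" and "0 < m"
    and mass: "(\<Sum>i\<in>A. \<mu> i) \<le> real (card A) - real m"
  shows "\<exists>i\<in>A. \<mu> i = 0"
proof (rule ccontr)
  assume "\<not> ?thesis"
  then have pos: "\<forall>i\<in>A. 0 < \<mu> i" using box by force
  define F where "F = fractional A \<mu>"
  have ones: "\<mu> i = 1" if "i \<in> A - F" for i
    using that pos box by (force simp: F_def fractional_def)
  have FA: "F \<subseteq> A" "finite F" using fin by (auto simp: F_def fractional_def finite_subset)
  have "(\<Sum>i\<in>A. \<mu> i) = real (card (A - F)) + (\<Sum>i\<in>F. \<mu> i)"
    using sum.subset_diff[OF FA(1) fin, of \<mu>] ones by simp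
  moreover have "real (card (A - F)) = real (card A) - real (card F)"
    using FA fin by (simp add: card_Diff_subset card_mono)
  moreover have "real (card F) - real m < (\<Sum>i\<in>F. \<mu> i)"
  proof (cases "F = {}")
    case False
    then have "0 < (\<Sum>i\<in>F. \<mu> i)" using FA pos by (intro sum_pos) auto
    with few show ?thesis by (simp add: F_def)
  qed (use \<open>0 < m\<close> in simp)
  ultimately show False using mass by simp
qed

lemma balanced_remove:
  fixes v :: "'i \<Rightarrow> 'p::finite \<Rightarrow> real"
  assumes fin: "finite A" and ne: "A \<noteq> {}" and bal: "balanced A v"
  shows "\<exists>i\<in>A. balanced (A - {i}) v"
proof (cases "card A \<le> CARD('p)")
  case True
  with fin ne show ?thesis by (auto simp: balanced_def)
next
  case False
  define n d where "n = real (card A)" and "d = real CARD('p)"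
  have nd: "d + 1 \<le> n" "0 \<le> d" using False by (simp_all add: n_def d_def)
  obtain \<kappa> where \<kappa>: "zero_sum_weights A v \<kappa> (n - d)"
    using bal False by (auto simp: balanced_def n_def d_def)
  \<comment> \<open>Scale the weights down to total mass \<open>n - d - 1\<close>, then pass to a vertex solution.\<close>
  define r where "r = (n - d - 1) / (n - d)"
  have "0 \<le> r" "r \<le> 1" using nd by (auto simp: r_def)
  from zero_sum_weights_scale[OF \<kappa> this]
  have "zero_sum_weights A v (\<lambda>i. r * \<kappa> i) (n - d - 1)"
    using nd by (simp add: r_def)
  then obtain \<mu> where \<mu>: "zero_sum_weights A v \<mu> (n - d - 1)"
    and few: "card (fractional A \<mu>) \<le> CARD('p) + 1"
    using zero_sum_weights_few_fractional[OF fin] by blast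
  have "\<exists>i\<in>A. \<mu> i = 0"
    using \<mu> nd by (intro exists_zero_weight[OF fin _ few]) (auto simp: zero_sum_weights_def n_def d_def)
  then obtain i where i: "i \<in> A" "\<mu> i = 0" by blast
  have drop_i: "(\<Sum>j\<in>A - {i}. \<mu> j * g j) = (\<Sum>j\<in>A. \<mu> j * g j)" for g
    using sum.remove[OF fin i(1), of "\<lambda>j. \<mu> j * g j"] i(2) by simp
  have "zero_sum_weights (A - {i}) v \<mu> (real (card (A - {i})) - d)"
    using \<mu> drop_i[of "\<lambda>_. 1"] drop_i[of "\<lambda>j. v j _"] fin i nd
    by (simp add: zero_sum_weights_def card_Diff_singleton n_def)
  with i show ?thesis by (auto simp: balanced_def d_def)
qed

lemma balanced_sum_bound:
  fixes v :: "'i \<Rightarrow> 'p::finite \<Rightarrow> real"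
  assumes fin: "finite A" and bal: "balanced A v"
    and bound: "\<forall>i\<in>A. \<forall>p. \<bar>v i p\<bar> \<le> M" and M: "0 \<le> M"
  shows "\<bar>\<Sum>i\<in>A. v i p\<bar> \<le> real CARD('p) * M"
proof (cases "card A \<le> CARD('p)")
  case True
  have "\<bar>\<Sum>i\<in>A. v i p\<bar> \<le> (\<Sum>i\<in>A. M)"
    using bound by (intro order.trans[OF sum_abs sum_mono]) auto
  also have "\<dots> \<le> real CARD('p) * M"
    using True M by (simp add: mult_right_mono)
  finally show ?thesis .
next
  case False
  then obtain \<mu> where \<mu>: "zero_sum_weights A v \<mu> (real (card A) - real CARD('p))"
    using bal by (auto simp: balanced_def)
  \<comment> \<open>Subtracting the zero weighted sum leaves weights \<open>1 - \<mu> i \<ge> 0\<close> of total mass \<open>CARD('p)\<close>.\<close>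
  have "(\<Sum>i\<in>A. v i p) = (\<Sum>i\<in>A. (1 - \<mu> i) * v i p)"
    using \<mu> by (simp add: zero_sum_weights_def algebra_simps sum_subtractf)
  also have "\<bar>\<dots>\<bar> \<le> (\<Sum>i\<in>A. (1 - \<mu> i) * M)"
    using \<mu> bound by (intro order.trans[OF sum_abs sum_mono])
      (auto simp: zero_sum_weights_def abs_mult intro: mult_left_mono)
  also have "\<dots> = real CARD('p) * M"
    using \<mu> by (simp add: zero_sum_weights_def sum_subtractf flip: sum_distrib_right)
  finally show ?thesis .
qed

lemma balanced_chain:
  fixes v :: "'i \<Rightarrow> 'p::finite \<Rightarrow> real"
  assumes fin: "finite A" and bal: "balanced A v"
  shows "\<exists>C. decseq C \<and> C 0 = A \<and>
           (\<forall>j\<le>card A. balanced (C j) v \<and> card (C j) = card A - j)"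
proof -
  obtain next_out where next_out:
    "\<And>B. finite B \<Longrightarrow> B \<noteq> {} \<Longrightarrow> balanced B v \<Longrightarrow>
       next_out B \<in> B \<and> balanced (B - {next_out B}) v"
    using balanced_remove[of _ v] by metis
  define C where "C j = ((\<lambda>B. B - {next_out B}) ^^ j) A" for j
  have "decseq C" by (rule decseq_SucI) (auto simp: C_def)
  moreover have "balanced (C j) v \<and> card (C j) = card A - j \<and> finite (C j)" if "j \<le> card A" for j
    using that
  proof (induction j)
    case (Suc j)
    then have "C j \<noteq> {}" by auto
    with Suc next_out[of "C j"] show ?case by (simp add: C_def card_Diff_singleton)
  qed (simp add: C_def fin bal)
  ultimately show ?thesis by (auto simp: C_def)
qed

lemma card_int_box:
  "card {x :: 'p::finite \<Rightarrow> int. \<forall>p. \<bar>x p\<bar> \<le> int c} = (2 * c + 1) ^ CARD('p)"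
proof -
  have "{x :: 'p \<Rightarrow> int. \<forall>p. \<bar>x p\<bar> \<le> int c} = PiE UNIV (\<lambda>_. {- int c..int c})"
    by (auto simp: PiE_def extensional_def Pi_def abs_le_iff minus_le_iff)
  then show ?thesis by (simp add: card_PiE nat_add_distrib nat_mult_distrib)
qed

lemma zero_sum_chain_with_small_sums:
  fixes v :: "'i \<Rightarrow> 'p::finite \<Rightarrow> int"
  assumes fin: "finite I" and zero: "\<forall>p. (\<Sum>i\<in>I. v i p) = 0"
    and bound: "\<forall>i\<in>I. \<forall>p. \<bar>v i p\<bar> \<le> int M"
  shows "\<exists>C. decseq C \<and> C 0 = I \<and>
           (\<forall>j\<le>card I. card (C j) = card I - j \<and> (\<forall>p. \<bar>\<Sum>i\<in>C j. v i p\<bar> \<le> int (CARD('p) * M)))"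
proof -
  define vr where "vr i p = real_of_int (v i p)" for i p
  have "balanced I vr"
    by (intro balanced_if_zero_sum fin) (simp add: vr_def zero flip: of_int_sum)
  then obtain C where C: "decseq C" "C 0 = I"
    and bal: "\<And>j. j \<le> card I \<Longrightarrow> balanced (C j) vr \<and> card (C j) = card I - j"
    using balanced_chain[OF fin] by blast
  have CI: "C j \<subseteq> I" for j using C decseq_def by (metis le0)
  have "\<bar>\<Sum>i\<in>C j. v i p\<bar> \<le> int (CARD('p) * M)" if "j \<le> card I" for j p
  proof -
    have "finite (C j)" using CI fin finite_subset by blast
    moreover have "\<forall>i\<in>C j. \<forall>p. \<bar>vr i p\<bar> \<le> real M"
      using CI bound by (metis subsetD vr_def of_int_abs of_int_le_iff of_int_of_nat_eq)
    ultimately have "\<bar>\<Sum>i\<in>C j. vr i p\<bar> \<le> real CARD('p) * real M"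
      using bal[OF that] by (intro balanced_sum_bound) auto
    then have "real_of_int \<bar>\<Sum>i\<in>C j. v i p\<bar> \<le> real_of_int (int (CARD('p) * M))"
      by (simp add: vr_def flip: of_int_sum of_int_abs)
    then show ?thesis unfolding of_int_le_iff .
  qed
  with C bal show ?thesis by blast
qed

text \<open>The sums over the first \<open>K + 1\<close> sets of such a chain lie in a box with \<open>K\<close> points,
  so two of them agree.\<close>
lemma exists_small_zero_sum_subset:
  fixes v :: "'i \<Rightarrow> 'p::finite \<Rightarrow> int"
  assumes fin: "finite I" and ne: "I \<noteq> {}" and zero: "\<forall>p. (\<Sum>i\<in>I. v i p) = 0"
    and bound: "\<forall>i\<in>I. \<forall>p. \<bar>v i p\<bar> \<le> int M"
  shows "\<exists>B\<subseteq>I. B \<noteq> {} \<and> card B \<le> (2 * CARD('p) * M + 1) ^ CARD('p) \<and>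
           (\<forall>p. (\<Sum>i\<in>B. v i p) = 0)"
proof (cases "card I \<le> (2 * CARD('p) * M + 1) ^ CARD('p)")
  case True
  with ne zero show ?thesis by blast
next
  case False
  define K where "K = (2 * CARD('p) * M + 1) ^ CARD('p)"
  obtain C where C: "decseq C" "C 0 = I"
    and chain: "\<forall>j\<le>card I. card (C j) = card I - j \<and> (\<forall>p. \<bar>\<Sum>i\<in>C j. v i p\<bar> \<le> int (CARD('p) * M))"
    using zero_sum_chain_with_small_sums[OF fin zero bound] by blast
  have CI: "C j \<subseteq> I" for j using C decseq_def by (metis le0)
  define Box where "Box = {x :: 'p \<Rightarrow> int. \<forall>p. \<bar>x p\<bar> \<le> int (CARD('p) * M)}"
  define f where "f j p = (\<Sum>i\<in>C j. v i p)" for j p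
  have "f ` {0..K} \<subseteq> Box" using chain False by (auto simp: Box_def f_def K_def)
  moreover have card_Box: "card Box = K" unfolding Box_def card_int_box by (simp add: K_def algebra_simps)
  moreover have "finite Box" using card_Box by (intro card_ge_0_finite) (simp add: K_def)
  ultimately have "\<not> inj_on f {0..K}"
    using card_inj_on_le[of f "{0..K}" Box] by fastforce
  then obtain a b where ab: "a < b" "b \<le> K" "f a = f b"
    unfolding inj_on_def by (metis atLeastAtMost_iff linorder_neqE_nat)
  define B where "B = C a - C b"
  have sub: "C b \<subseteq> C a" using C(1) ab(1) by (simp add: decseq_def)
  have fin_a: "finite (C a)" using CI fin finite_subset by blast
  have "b \<le> card I" using ab(2) False by (simp add: K_def)
  then have "card B = b - a"
    using chain ab(1) sub fin_a by (simp add: B_def card_Diff_subset finite_subset)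
  then have "B \<noteq> {}" "card B \<le> K" using ab(1,2) by auto
  moreover have "B \<subseteq> I" using CI[of a] by (auto simp: B_def)
  moreover have "(\<Sum>i\<in>B. v i p) = 0" for p
    using sum.subset_diff[OF sub fin_a, of "\<lambda>i. v i p"] fun_cong[OF ab(3), of p]
    by (simp add: B_def f_def)
  ultimately show ?thesis unfolding K_def by blast
qed

lemma zero_sum_partition:
  fixes v :: "'i \<Rightarrow> 'p::finite \<Rightarrow> int"
  assumes "finite I" "\<forall>p. (\<Sum>i\<in>I. v i p) = 0" "\<forall>i\<in>I. \<forall>p. \<bar>v i p\<bar> \<le> int M"
  shows "\<exists>\<P>. partition_on I \<P> \<and>
     (\<forall>B\<in>\<P>. card B \<le> (2 * CARD('p) * M + 1) ^ CARD('p) \<and> (\<forall>p. (\<Sum>i\<in>B. v i p) = 0))"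
  using assms
proof (induction "card I" arbitrary: I rule: less_induct)
  case less
  show ?case
  proof (cases "I = {}")
    case True
    then show ?thesis by (intro exI[of _ "{}"]) (simp add: partition_on_empty)
  next
    case False
    then obtain B where B: "B \<subseteq> I" "B \<noteq> {}"
      "card B \<le> (2 * CARD('p) * M + 1) ^ CARD('p)" "\<forall>p. (\<Sum>i\<in>B. v i p) = 0"
      using exists_small_zero_sum_subset[OF less.prems(1) _ less.prems(2,3)] by blast
    have "finite B" using B(1) less.prems(1) finite_subset by blast
    have "0 < card B" using B(2) \<open>finite B\<close> by (simp add: card_gt_0_iff)
    moreover have "card B \<le> card I" using card_mono[OF less.prems(1) B(1)] .
    ultimately have lt: "card (I - B) < card I" using card_Diff_subset[OF \<open>finite B\<close> B(1)] by simp
    have zero: "\<forall>p. (\<Sum>i\<in>I - B. v i p) = 0"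
    proof
      fix p show "(\<Sum>i\<in>I - B. v i p) = 0"
        using B(4) less.prems(2) sum.subset_diff[OF B(1) less.prems(1), of "\<lambda>i. v i p"] by simp
    qed
    have bound: "\<forall>i\<in>I - B. \<forall>p. \<bar>v i p\<bar> \<le> int M" using less.prems(3) by blast
    obtain \<P> where \<P>: "partition_on (I - B) \<P>"
      "\<forall>B\<in>\<P>. card B \<le> (2 * CARD('p) * M + 1) ^ CARD('p) \<and> (\<forall>p. (\<Sum>i\<in>B. v i p) = 0)"
      using less.hyps[OF lt _ zero bound] less.prems(1) by blast
    have "partition_on I (insert B \<P>)"
      using \<P>(1) B(1,2) by (subst partition_on_insert) (auto simp: partition_on_def disjnt_def)
    with \<P>(2) B(3,4) show ?thesis by (intro exI[of _ "insert B \<P>"]) auto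
  qed
qed

definition sign_compatible :: "('p \<Rightarrow> int) \<Rightarrow> ('p \<Rightarrow> int) \<Rightarrow> bool" where
  "sign_compatible x y \<longleftrightarrow> (\<forall>p. (y p \<le> 0 \<longrightarrow> x p \<le> 0) \<and> (0 \<le> y p \<longrightarrow> 0 \<le> x p))"

lemma Plus_vimage_Inl_Inr: "Inl -` B <+> Inr -` B = B"
proof (rule set_eqI)
  fix x :: "'a + 'b"
  show "x \<in> Inl -` B <+> Inr -` B \<longleftrightarrow> x \<in> B" by (cases x) auto
qed

text \<open>The family \<open>u\<close> extended by the vectors \<open>Inr (q, j)\<close>, each the unit vector
  \<open>- sgn (s q)\<close> at \<open>q\<close>; with \<open>\<bar>s q\<bar>\<close> of them at every \<open>q\<close> they cancel the sum \<open>s\<close> of \<open>u\<close>.\<close>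
definition add_units :: "('i \<Rightarrow> 'p \<Rightarrow> int) \<Rightarrow> ('p \<Rightarrow> int) \<Rightarrow> 'i + 'p \<times> nat \<Rightarrow> 'p \<Rightarrow> int" where
  "add_units u s x p = (case x of Inl i \<Rightarrow> u i p | Inr y \<Rightarrow> if fst y = p then - sgn (s p) else 0)"

lemma sum_add_units:
  assumes "finite B"
  shows "(\<Sum>x\<in>B. add_units u s x p) =
           (\<Sum>i\<in>Inl -` B. u i p) - sgn (s p) * int (card {y \<in> Inr -` B. fst y = p})"
proof -
  have fin: "finite (Inl -` B)" "finite (Inr -` B)" using assms by (auto intro: finite_vimageI)
  then have "(\<Sum>x\<in>B. add_units u s x p) =
      (\<Sum>i\<in>Inl -` B. u i p) + (\<Sum>y\<in>Inr -` B. add_units u s (Inr y) p)"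
    using sum.Plus[of "Inl -` B" "Inr -` B" "\<lambda>x. add_units u s x p"]
    by (simp add: Plus_vimage_Inl_Inr add_units_def)
  also have "(\<Sum>y\<in>Inr -` B. add_units u s (Inr y) p) = - sgn (s p) * int (card {y \<in> Inr -` B. fst y = p})"
    using sum.inter_filter[OF fin(2), of "\<lambda>_. - sgn (s p)" "\<lambda>y. fst y = p"]
    by (simp add: add_units_def mult.commute)
  finally show ?thesis by simp
qed

lemma sign_compatible_partition:
  fixes u :: "'i \<Rightarrow> 'p::finite \<Rightarrow> int"
  assumes fin: "finite I" and M: "1 \<le> M" and bound: "\<forall>i\<in>I. \<forall>p. \<bar>u i p\<bar> \<le> int M"
  shows "\<exists>\<P>. partition_on I \<P> \<and>
     (\<forall>J\<in>\<P>. card J \<le> (2 * CARD('p) * M + 1) ^ CARD('p) \<and>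
            sign_compatible (\<lambda>p. \<Sum>i\<in>J. u i p) (\<lambda>p. \<Sum>i\<in>I. u i p))"
proof -
  define s where "s p = (\<Sum>i\<in>I. u i p)" for p
  define U where "U = Sigma UNIV (\<lambda>p. {..<nat \<bar>s p\<bar>})"
  have fin_IU: "finite (I <+> U)" using fin by (simp add: U_def)
  have vimages: "Inl -` (I <+> U) = I" "Inr -` (I <+> U) = U" by auto
  have "{y\<in>U. fst y = p} = {p} \<times> {..<nat \<bar>s p\<bar>}" for p by (auto simp: U_def)
  then have "(\<Sum>x\<in>I <+> U. add_units u s x p) = 0" for p
    using sum_add_units[OF fin_IU, of u s p] by (simp add: vimages s_def sgn_mult_abs)
  moreover have "\<forall>x\<in>I <+> U. \<forall>p. \<bar>add_units u s x p\<bar> \<le> int M"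
    using bound M by (auto simp: add_units_def abs_sgn_eq)
  ultimately obtain \<Q> where \<Q>: "partition_on (I <+> U) \<Q>"
    "\<forall>B\<in>\<Q>. card B \<le> (2 * CARD('p) * M + 1) ^ CARD('p) \<and> (\<forall>p. (\<Sum>x\<in>B. add_units u s x p) = 0)"
    using zero_sum_partition[OF fin_IU, of "add_units u s" M] by blast
  have fin_B: "finite B" if "B \<in> \<Q>" for B
    using partition_onD1[OF \<Q>(1)] that fin_IU by (metis Union_upper finite_subset)
  define \<P> where "\<P> = (\<lambda>B. Inl -` B) ` \<Q> - {{}}"
  have "partition_on I \<P>"
    using partition_on_vimage[OF \<Q>(1), of Inl] by (simp add: \<P>_def vimages)
  moreover have "card J \<le> (2 * CARD('p) * M + 1) ^ CARD('p) \<and> sign_compatible (\<lambda>p. \<Sum>i\<in>J. u i p) s"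
    if "J \<in> \<P>" for J
  proof -
    from that obtain B where B: "B \<in> \<Q>" "J = Inl -` B" by (auto simp: \<P>_def)
    have "card J \<le> card B"
      unfolding B(2) by (rule card_inj_on_le[OF _ _ fin_B[OF B(1)]]) auto
    moreover have "(\<Sum>i\<in>J. u i p) = sgn (s p) * int (card {y \<in> Inr -` B. fst y = p})" for p
      using \<Q>(2) B sum_add_units[OF fin_B[OF B(1)], of u s p] by simp
    ultimately show ?thesis using \<Q>(2) B(1) by (auto simp: sign_compatible_def sgn_if)
  qed
  ultimately show ?thesis unfolding s_def by blast
qed

section \<open>Cycles and displacements\<close>

lemma is_path_append:
  "is_path S E s (xs @ ys) s' \<longleftrightarrow> (\<exists>m. is_path S E s xs m \<and> is_path S E m ys s')"
proof (induction xs arbitrary: s)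
  case Nil
  have "is_path S E s ys s' \<Longrightarrow> s \<in> S" by (cases ys) auto
  then show ?case by auto
qed auto

lemma is_path_states: "is_path S E s xs s' \<Longrightarrow> s \<in> S \<and> s' \<in> S"
  by (induction xs arbitrary: s) auto

lemma is_path_edges: "is_path S E s xs s' \<Longrightarrow> set xs \<subseteq> E"
  by (induction xs arbitrary: s) auto

lemma is_path_target_unique: "is_path S E s xs m \<Longrightarrow> is_path S E s xs m' \<Longrightarrow> m = m'"
  by (induction xs arbitrary: s) auto

lemma is_cycle_edges: "is_cycle S E \<theta> \<Longrightarrow> set \<theta> \<subseteq> E"
  by (auto simp: is_cycle_def dest: is_path_edges)

text \<open>Among the \<open>card S + 1\<close> first states visited by a long closed path two coincide,
  and the segment between them is a short cycle that can be cut out.\<close>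
lemma closed_path_decompose:
  assumes fin: "finite S" and path: "is_path S E s c s"
  shows "\<exists>cs. is_multicycle S E cs \<and> (\<forall>\<theta>\<in>set cs. length \<theta> \<le> card S) \<and> mset (concat cs) = mset c"
  using path
proof (induction "length c" arbitrary: c rule: less_induct)
  case less
  show ?case
  proof (cases "length c \<le> card S")
    case True
    with less.prems show ?thesis
      by (intro exI[of _ "[c]"]) (auto simp: is_multicycle_def is_cycle_def)
  next
    case False
    have "\<exists>m. is_path S E s (take i c) m \<and> is_path S E m (drop i c) s" for i
      using less.prems is_path_append[of S E s "take i c" "drop i c" s] by simp
    then obtain st where st: "\<And>i. is_path S E s (take i c) (st i) \<and> is_path S E (st i) (drop i c) s"
      by metis
    have "st i \<in> S" for i using is_path_states[OF conjunct1[OF st[of i]]] by simp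
    then have "st ` {0..card S} \<subseteq> S" by blast
    then have "\<not> inj_on st {0..card S}"
      using card_inj_on_le[OF _ _ fin, of st "{0..card S}"] by fastforce
    then obtain a b where ab: "a < b" "b \<le> card S" "st a = st b"
      unfolding inj_on_def by (metis atLeastAtMost_iff linorder_neqE_nat)
    define c1 c2 c3 where "c1 = take a c" and "c2 = take (b - a) (drop a c)" and "c3 = drop b c"
    have take_b: "take b c = c1 @ c2"
      using ab(1) take_add[of a "b - a" c] by (simp add: c1_def c2_def)
    have c: "c = c1 @ c2 @ c3" using append_take_drop_id[of b c] by (simp add: take_b c3_def)
    have p1: "is_path S E s c1 (st a)" using st[of a] by (simp add: c1_def)
    obtain m where m: "is_path S E s c1 m" "is_path S E m c2 (st b)"
      using st[of b] unfolding take_b is_path_append by blast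
    with p1 ab(3) have cycle: "is_path S E (st a) c2 (st a)"
      using is_path_target_unique by metis
    have "is_path S E s (c1 @ c3) s"
      unfolding is_path_append using p1 st[of b] ab(3) by (auto simp: c3_def)
    moreover have "length (c1 @ c3) < length c" using ab False by (simp add: c1_def c3_def)
    ultimately obtain cs where "is_multicycle S E cs" "\<forall>\<theta>\<in>set cs. length \<theta> \<le> card S"
      "mset (concat cs) = mset (c1 @ c3)"
      using less.hyps by blast
    moreover have "length c2 \<le> card S" using ab by (simp add: c2_def)
    ultimately show ?thesis using cycle c
      by (intro exI[of _ "c2 # cs"]) (auto simp: is_multicycle_def is_cycle_def)
  qed
qed

lemma multicycle_decompose_short:
  assumes "finite S" "is_multicycle S E \<Theta>"
  shows "\<exists>cs. is_multicycle S E cs \<and> (\<forall>\<theta>\<in>set cs. length \<theta> \<le> card S) \<and>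
             mset (concat cs) = mset (concat \<Theta>)"
  using assms(2)
proof (induction \<Theta>)
  case Nil
  then show ?case by (intro exI[of _ "[]"]) (simp add: is_multicycle_def)
next
  case (Cons \<theta> \<Theta>)
  then obtain cs where "is_multicycle S E cs" "\<forall>\<theta>\<in>set cs. length \<theta> \<le> card S"
    "mset (concat cs) = mset (concat \<Theta>)"
    by (auto simp: is_multicycle_def)
  moreover from Cons.prems obtain s where "is_path S E s \<theta> s"
    by (auto simp: is_multicycle_def is_cycle_def)
  then obtain ds where "is_multicycle S E ds" "\<forall>\<theta>\<in>set ds. length \<theta> \<le> card S"
    "mset (concat ds) = mset \<theta>"
    using closed_path_decompose[OF assms(1)] by blast
  ultimately show ?case
    by (intro exI[of _ "ds @ cs"]) (auto simp: is_multicycle_def)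
qed

lemma delta_mc_eq_sum_mset: "delta_mc \<Theta> p = (\<Sum>e\<in>#mset (concat \<Theta>). delta_edge e p)"
  by (induction \<Theta>) (simp_all add: delta_mc_def delta_word_def sum_mset_sum_list flip: mset_map)

lemma mc_parikh_eq_count: "mc_parikh \<Theta> e = count (mset (concat \<Theta>)) e"
  by (induction \<Theta>) (auto simp: mc_parikh_def count_mset)

lemma norm_inf_ge:
  assumes "finite T" "t \<in> T"
  shows "fst t p \<le> norm_inf T" "snd t p \<le> norm_inf T"
proof -
  have "{fst t p | t p. t \<in> T} = (\<Union>t\<in>T. range (fst t))"
    "{snd t p | t p. t \<in> T} = (\<Union>t\<in>T. range (snd t))" by blast+
  then have fin: "finite ({0} \<union> {fst t p | t p. t \<in> T} \<union> {snd t p | t p. t \<in> T})"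
    using assms(1) by simp
  show "fst t p \<le> norm_inf T" "snd t p \<le> norm_inf T"
    unfolding norm_inf_def using assms(2) by (blast intro: Max_ge[OF fin])+
qed

lemma abs_delta_word_le:
  assumes "petri_cs S T E" "set \<theta> \<subseteq> E"
  shows "\<bar>delta_word \<theta> p\<bar> \<le> int (length \<theta> * norm_inf T)"
  using assms(2)
proof (induction \<theta>)
  case (Cons e \<theta>)
  have "fst (snd e) \<in> T" "finite T" using assms(1) Cons.prems by (auto simp: petri_cs_def)
  then have "fst (fst (snd e)) p \<le> norm_inf T" "snd (fst (snd e)) p \<le> norm_inf T"
    using norm_inf_ge by blast+
  then have "\<bar>delta_edge e p\<bar> \<le> int (norm_inf T)"
    by (simp add: delta_edge_def delta_trans_def abs_le_iff)
  moreover have "\<bar>delta_word \<theta> p\<bar> \<le> int (length \<theta> * norm_inf T)"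
    using Cons.IH Cons.prems by simp
  moreover have "\<bar>delta_word (e # \<theta>) p\<bar> \<le> \<bar>delta_edge e p\<bar> + \<bar>delta_word \<theta> p\<bar>"
    by (simp add: delta_word_def abs_triangle_ineq)
  ultimately show ?case by simp
qed (simp add: delta_word_def)

lemma abs_delta_mc_le:
  assumes "petri_cs S T E" "is_multicycle S E \<Theta>"
  shows "\<bar>delta_mc \<Theta> p\<bar> \<le> int (mc_length \<Theta> * norm_inf T)"
  using assms(2)
proof (induction \<Theta>)
  case (Cons \<theta> \<Theta>)
  then have "is_cycle S E \<theta>" by (simp add: is_multicycle_def)
  then have "\<bar>delta_word \<theta> p\<bar> \<le> int (length \<theta> * norm_inf T)"
    using abs_delta_word_le[OF assms(1) is_cycle_edges] by blast
  moreover have "\<bar>delta_mc (\<theta> # \<Theta>) p\<bar> \<le> \<bar>delta_word \<theta> p\<bar> + \<bar>delta_mc \<Theta> p\<bar>"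
    by (simp add: delta_mc_def abs_triangle_ineq)
  moreover have "\<bar>delta_mc \<Theta> p\<bar> \<le> int (mc_length \<Theta> * norm_inf T)"
    using Cons.IH Cons.prems by (simp add: is_multicycle_def)
  ultimately show ?case by (simp add: mc_length_def algebra_simps)
qed (simp add: delta_mc_def mc_length_def)

lemma mc_parikh_le_mc_length: "mc_parikh \<Theta> e \<le> mc_length \<Theta>"
  by (induction \<Theta>) (auto simp: mc_parikh_def mc_length_def count_le_length add_mono)

lemma delta_mc_concat: "delta_mc (concat \<Theta>s) p = (\<Sum>\<Theta>\<leftarrow>\<Theta>s. delta_mc \<Theta> p)"
  by (induction \<Theta>s) (simp_all add: delta_mc_def)

lemma mc_parikh_concat: "mc_parikh (concat \<Theta>s) e = (\<Sum>\<Theta>\<leftarrow>\<Theta>s. mc_parikh \<Theta> e)"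
  by (induction \<Theta>s) (simp_all add: mc_parikh_def)

lemma mc_length_concat: "mc_length (concat \<Theta>s) = (\<Sum>\<Theta>\<leftarrow>\<Theta>s. mc_length \<Theta>)"
  by (induction \<Theta>s) (simp_all add: mc_length_def)

lemma sum_list_eq_sum_nth: "(\<Sum>x\<leftarrow>xs. h x) = (\<Sum>i<length xs. h (xs ! i))"
  by (simp add: sum_list_sum_nth atLeast0LessThan)

lemma sum_list_blocks_of_partition:
  assumes "partition_on {..<length xs} \<P>"
  shows "(\<Sum>J\<in>\<P>. \<Sum>x\<leftarrow>map ((!) xs) (sorted_list_of_set J). h x) = (\<Sum>x\<leftarrow>xs. h x)"
proof -
  have "finite J" if "J \<in> \<P>" for J
    using partition_onD1[OF assms] that by (metis Union_upper finite_lessThan finite_subset)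
  then have "(\<Sum>J\<in>\<P>. \<Sum>x\<leftarrow>map ((!) xs) (sorted_list_of_set J). h x) = (\<Sum>J\<in>\<P>. \<Sum>i\<in>J. h (xs ! i))"
    by (simp add: sum_list_distinct_conv_sum_set)
  also have "\<dots> = (\<Sum>i<length xs. h (xs ! i))"
    by (rule sum.partition[OF finite_lessThan assms, symmetric])
  finally show ?thesis by (simp add: sum_list_eq_sum_nth)
qed

lemma short_cycles_sign_compatible_partition:
  fixes cs :: "('s, 'p::finite) edge list list"
  assumes petri: "petri_cs S T E" and pos: "norm_inf T > 0"
    and cs: "is_multicycle S E cs" "\<forall>\<theta>\<in>set cs. length \<theta> \<le> card S"
  shows "\<exists>\<P>. partition_on {..<length cs} \<P> \<and>
     (\<forall>J\<in>\<P>. card J \<le> (2 * CARD('p) * (card S * norm_inf T) + 1) ^ CARD('p) \<and>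
            sign_compatible (\<lambda>p. \<Sum>i\<in>J. delta_word (cs ! i) p) (delta_mc cs))"
proof -
  have "finite S" "S \<noteq> {}" using petri by (auto simp: petri_cs_def)
  then have M: "1 \<le> card S * norm_inf T" using pos by (simp add: Suc_le_eq card_gt_0_iff)
  have bound: "\<forall>i\<in>{..<length cs}. \<forall>p. \<bar>delta_word (cs ! i) p\<bar> \<le> int (card S * norm_inf T)"
  proof (intro ballI allI)
    fix i p assume "i \<in> {..<length cs}"
    then have "cs ! i \<in> set cs" by simp
    then have "\<bar>delta_word (cs ! i) p\<bar> \<le> int (length (cs ! i) * norm_inf T)"
      using abs_delta_word_le[OF petri] cs(1) is_cycle_edges by (metis is_multicycle_def)
    also have "\<dots> \<le> int (card S * norm_inf T)"
      unfolding of_nat_le_iff using \<open>cs ! i \<in> set cs\<close> cs(2) by (simp add: mult_le_mono1)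
    finally show "\<bar>delta_word (cs ! i) p\<bar> \<le> int (card S * norm_inf T)" .
  qed
  have "delta_mc cs = (\<lambda>p. \<Sum>i\<in>{..<length cs}. delta_word (cs ! i) p)"
    by (simp add: delta_mc_def sum_list_eq_sum_nth fun_eq_iff)
  with sign_compatible_partition[OF finite_lessThan M bound] show ?thesis by simp
qed

lemma multicycle_sign_compatible_blocks:
  fixes \<Theta> :: "('s, 'p::finite) edge list list"
  assumes petri: "petri_cs S T E" and pos: "norm_inf T > 0" and mc: "is_multicycle S E \<Theta>"
  defines "K \<equiv> (2 * CARD('p) * (card S * norm_inf T) + 1) ^ CARD('p)"
  shows "\<exists>(\<P> :: nat set set) blk. finite \<P> \<and>
     (\<forall>p. (\<Sum>J\<in>\<P>. delta_mc (blk J) p) = delta_mc \<Theta> p) \<and>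
     (\<forall>e. (\<Sum>J\<in>\<P>. mc_parikh (blk J) e) = mc_parikh \<Theta> e) \<and>
     (\<forall>J\<in>\<P>. is_multicycle S E (blk J) \<and> mc_length (blk J) \<le> K * card S \<and>
            sign_compatible (delta_mc (blk J)) (delta_mc \<Theta>))"
proof -
  have "finite S" using petri by (simp add: petri_cs_def)
  then obtain cs where cs: "is_multicycle S E cs" "\<forall>\<theta>\<in>set cs. length \<theta> \<le> card S"
    and same_edges: "mset (concat cs) = mset (concat \<Theta>)"
    using multicycle_decompose_short[OF _ mc] by blast
  have same: "delta_mc cs = delta_mc \<Theta>" "mc_parikh cs = mc_parikh \<Theta>"
    unfolding fun_eq_iff delta_mc_eq_sum_mset mc_parikh_eq_count same_edges by simp_all
  obtain \<P> where \<P>: "partition_on {..<length cs} \<P>"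
    and blocks: "\<forall>J\<in>\<P>. card J \<le> K \<and> sign_compatible (\<lambda>p. \<Sum>i\<in>J. delta_word (cs ! i) p) (delta_mc cs)"
    using short_cycles_sign_compatible_partition[OF petri pos cs] unfolding K_def by blast
  have sub: "J \<subseteq> {..<length cs}" and fin_J: "finite J" if "J \<in> \<P>" for J
    using partition_onD1[OF \<P>] that by (auto intro: finite_subset)
  define blk where "blk J = map ((!) cs) (sorted_list_of_set J)" for J
  have "(\<Sum>J\<in>\<P>. delta_mc (blk J) p) = delta_mc \<Theta> p" for p
    using sum_list_blocks_of_partition[OF \<P>, of "\<lambda>\<theta>. delta_word \<theta> p"]
    by (simp add: blk_def delta_mc_def flip: same)
  moreover have "(\<Sum>J\<in>\<P>. mc_parikh (blk J) e) = mc_parikh \<Theta> e" for e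
    using sum_list_blocks_of_partition[OF \<P>, of "\<lambda>\<theta>. count_list \<theta> e"]
    by (simp add: blk_def mc_parikh_def flip: same)
  moreover have "sign_compatible (delta_mc (blk J)) (delta_mc \<Theta>)" if "J \<in> \<P>" for J
  proof -
    have "delta_mc (blk J) = (\<lambda>p. \<Sum>i\<in>J. delta_word (cs ! i) p)"
      using fin_J[OF that]
      by (simp add: blk_def delta_mc_def sum_list_distinct_conv_sum_set comp_def fun_eq_iff)
    with blocks that same(1) show ?thesis by simp
  qed
  moreover have "is_multicycle S E (blk J) \<and> mc_length (blk J) \<le> K * card S" if "J \<in> \<P>" for J
  proof
    show "is_multicycle S E (blk J)"
      using cs(1) sub[OF that] fin_J[OF that] by (auto simp: blk_def is_multicycle_def)
    have "mc_length (blk J) = (\<Sum>i\<in>J. length (cs ! i))"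
      using fin_J[OF that] by (simp add: blk_def mc_length_def sum_list_distinct_conv_sum_set comp_def)
    also have "\<dots> \<le> card J * card S"
      using sub[OF that] cs(2) sum_bounded_above[of J "\<lambda>i. length (cs ! i)" "card S"] by force
    also have "\<dots> \<le> K * card S" using blocks that by simp
    finally show "mc_length (blk J) \<le> K * card S" .
  qed
  ultimately show ?thesis using finite_elements[OF finite_lessThan \<P>] by blast
qed

section \<open>Selecting few blocks\<close>

lemma sum_abs_eq_abs_sum_if_sign_compatible:
  assumes "\<forall>J\<in>\<J>. sign_compatible (w J) s"
  shows "(\<Sum>J\<in>\<J>. \<bar>w J p\<bar>) = \<bar>\<Sum>J\<in>\<J>. w J p\<bar>"
proof (cases "0 \<le> s p")
  case True
  with assms have "\<forall>J\<in>\<J>. 0 \<le> w J p" by (simp add: sign_compatible_def)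
  then show ?thesis by (simp add: sum_nonneg)
next
  case False
  with assms have "\<forall>J\<in>\<J>. w J p \<le> 0" by (simp add: sign_compatible_def)
  then show ?thesis by (simp add: sum_nonpos abs_of_nonpos sum_negf)
qed

lemma card_touching_le_norm1_restr:
  fixes w :: "'j \<Rightarrow> 'p::finite \<Rightarrow> int"
  assumes fin: "finite \<J>" and sc: "\<forall>J\<in>\<J>. sign_compatible (w J) s"
    and sum_w: "\<forall>p. (\<Sum>J\<in>\<J>. w J p) = s p"
  shows "int (card {J\<in>\<J>. \<exists>q\<in>Q. w J q \<noteq> 0}) \<le> norm1_restr s Q"
proof -
  define \<B> where "\<B> = {J\<in>\<J>. \<exists>q\<in>Q. w J q \<noteq> 0}"
  have "1 \<le> (\<Sum>q\<in>Q. \<bar>w J q\<bar>)" if "J \<in> \<B>" for J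
  proof -
    from that obtain q where "q \<in> Q" "w J q \<noteq> 0" by (auto simp: \<B>_def)
    then have "1 \<le> \<bar>w J q\<bar>" by simp
    also have "\<dots> \<le> (\<Sum>q\<in>Q. \<bar>w J q\<bar>)" using \<open>q \<in> Q\<close> by (intro member_le_sum) auto
    finally show ?thesis .
  qed
  then have "int (card \<B>) \<le> (\<Sum>J\<in>\<B>. \<Sum>q\<in>Q. \<bar>w J q\<bar>)"
    using sum_mono[of \<B> "\<lambda>_. 1 :: int"] by fastforce
  also have "\<dots> \<le> (\<Sum>J\<in>\<J>. \<Sum>q\<in>Q. \<bar>w J q\<bar>)"
    using fin by (intro sum_mono2) (auto simp: \<B>_def sum_nonneg)
  also have "\<dots> = (\<Sum>q\<in>Q. \<Sum>J\<in>\<J>. \<bar>w J q\<bar>)" by (rule sum.swap)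
  also have "\<dots> = (\<Sum>q\<in>Q. \<bar>s q\<bar>)"
    using sum_abs_eq_abs_sum_if_sign_compatible[OF sc] sum_w by simp
  finally show ?thesis by (simp add: \<B>_def norm1_restr_def)
qed

lemma exists_pos_outside:
  fixes f :: "'j \<Rightarrow> int"
  assumes "finite \<J>" "\<B> \<subseteq> \<J>" "k \<le> (\<Sum>J\<in>\<J>. f J)" "\<forall>J\<in>\<B>. f J \<le> X" "int (card \<B>) * X < k"
  shows "\<exists>J\<in>\<J> - \<B>. 0 < f J"
proof (rule ccontr)
  assume "\<not> ?thesis"
  then have "(\<Sum>J\<in>\<J> - \<B>. f J) \<le> 0" by (intro sum_nonpos) (simp add: not_less)
  moreover have "(\<Sum>J\<in>\<B>. f J) \<le> int (card \<B>) * X" using assms(4) sum_bounded_above by fastforce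
  moreover have "(\<Sum>J\<in>\<J>. f J) = (\<Sum>J\<in>\<J> - \<B>. f J) + (\<Sum>J\<in>\<B>. f J)"
    using sum.subset_diff[OF assms(2,1)] by simp
  ultimately show False using assms(3,5) by linarith
qed

lemma exists_few_good_blocks:
  fixes w :: "'j \<Rightarrow> 'p::finite \<Rightarrow> int" and c :: "'j \<Rightarrow> 'e \<Rightarrow> nat"
  assumes fin: "finite \<J>" "finite E"
    and sc: "\<forall>J\<in>\<J>. sign_compatible (w J) s" and sum_w: "\<forall>p. (\<Sum>J\<in>\<J>. w J p) = s p"
    and bound_w: "\<forall>J\<in>\<J>. \<forall>p. \<bar>w J p\<bar> \<le> int X" and bound_c: "\<forall>J\<in>\<J>. \<forall>e. c J e \<le> X"
    and k: "norm1_restr s Q * int X < int k"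
  shows "\<exists>G\<subseteq>\<J>. card G \<le> card E + CARD('p) \<and> (\<forall>J\<in>G. \<forall>q\<in>Q. w J q = 0) \<and>
           (\<forall>p. int k \<le> \<bar>s p\<bar> \<longrightarrow> (\<exists>J\<in>G. 0 < sgn (s p) * w J p)) \<and>
           (\<forall>e\<in>E. k \<le> (\<Sum>J\<in>\<J>. c J e) \<longrightarrow> (\<exists>J\<in>G. 0 < c J e))"
proof -
  \<comment> \<open>Blocks touching \<open>Q\<close> are few, and each contributes at most \<open>X\<close> to any coordinate,
    so they cannot account for a coordinate of size \<open>k\<close>.\<close>
  define \<B> where "\<B> = {J\<in>\<J>. \<exists>q\<in>Q. w J q \<noteq> 0}"
  have "int (card \<B>) * int X \<le> norm1_restr s Q * int X"
    unfolding \<B>_def by (intro mult_right_mono card_touching_le_norm1_restr[OF fin(1) sc sum_w]) simp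
  with k have few: "int (card \<B>) * int X < int k" by linarith
  have "\<exists>J\<in>\<J> - \<B>. 0 < c J e" if "k \<le> (\<Sum>J\<in>\<J>. c J e)" for e
    using exists_pos_outside[OF fin(1), of \<B> "int k" "\<lambda>J. int (c J e)" "int X"] that few bound_c
    by (auto simp: \<B>_def simp flip: of_nat_sum)
  then obtain je where je: "\<forall>e\<in>{e\<in>E. k \<le> (\<Sum>J\<in>\<J>. c J e)}. je e \<in> \<J> - \<B> \<and> 0 < c (je e) e"
    by (metis (mono_tags, lifting) mem_Collect_eq)
  have "\<exists>J\<in>\<J> - \<B>. 0 < sgn (s p) * w J p" if "int k \<le> \<bar>s p\<bar>" for p
  proof (rule exists_pos_outside[OF fin(1), of \<B> "int k" _ "int X"])
    show "int k \<le> (\<Sum>J\<in>\<J>. sgn (s p) * w J p)"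
      using that sum_w by (simp add: abs_sgn mult.commute flip: sum_distrib_left)
    show "\<forall>J\<in>\<B>. sgn (s p) * w J p \<le> int X"
      using bound_w by (auto simp: \<B>_def abs_mult abs_sgn_eq intro: order.trans[OF abs_ge_self])
  qed (use few in \<open>auto simp: \<B>_def\<close>)
  then obtain jp where jp: "\<forall>p\<in>{p. int k \<le> \<bar>s p\<bar>}. jp p \<in> \<J> - \<B> \<and> 0 < sgn (s p) * w (jp p) p"
    by (metis (mono_tags, lifting) mem_Collect_eq)
  define G where "G = je ` {e\<in>E. k \<le> (\<Sum>J\<in>\<J>. c J e)} \<union> jp ` {p. int k \<le> \<bar>s p\<bar>}"
  have "card G \<le> card {e\<in>E. k \<le> (\<Sum>J\<in>\<J>. c J e)} + card {p. int k \<le> \<bar>s p\<bar>}"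
    unfolding G_def using fin(2)
    by (intro order.trans[OF card_Un_le] add_mono card_image_le) simp_all
  also have "\<dots> \<le> card E + CARD('p)"
    using fin(2) by (intro add_mono card_mono) auto
  finally have "card G \<le> card E + CARD('p)" .
  moreover have "G \<subseteq> \<J> - \<B>" using je jp by (auto simp: G_def)
  ultimately show ?thesis
    using je jp by (intro exI[of _ G]) (auto simp: G_def \<B>_def)
qed

lemma sign_pattern_of_sum:
  fixes w :: "'j \<Rightarrow> 'p \<Rightarrow> int"
  assumes fin: "finite G" and sc: "\<forall>J\<in>G. sign_compatible (w J) s" and k: "0 < k"
    and big: "\<forall>p. k \<le> \<bar>s p\<bar> \<longrightarrow> (\<exists>J\<in>G. 0 < sgn (s p) * w J p)"
  shows "(s p \<le> 0 \<longrightarrow> (\<Sum>J\<in>G. w J p) \<le> 0) \<and> (s p \<le> - k \<longrightarrow> (\<Sum>J\<in>G. w J p) < 0) \<and>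
         (0 \<le> s p \<longrightarrow> 0 \<le> (\<Sum>J\<in>G. w J p)) \<and> (k \<le> s p \<longrightarrow> 0 < (\<Sum>J\<in>G. w J p))"
proof -
  have nonneg: "0 \<le> sgn (s p) * w J p" if "J \<in> G" for J
    using sc that by (auto simp: sign_compatible_def sgn_if)
  have "0 < sgn (s p) * (\<Sum>J\<in>G. w J p)" if p_big: "k \<le> \<bar>s p\<bar>"
  proof -
    obtain J0 where "J0 \<in> G" "0 < sgn (s p) * w J0 p" using big p_big by blast
    then show ?thesis
      using sum_pos2[OF fin, of J0 "\<lambda>J. sgn (s p) * w J p"] nonneg by (simp add: sum_distrib_left)
  qed
  moreover have "(s p \<le> 0 \<longrightarrow> (\<Sum>J\<in>G. w J p) \<le> 0) \<and> (0 \<le> s p \<longrightarrow> 0 \<le> (\<Sum>J\<in>G. w J p))"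
    using sc by (auto simp: sign_compatible_def intro: sum_nonneg sum_nonpos)
  ultimately show ?thesis using k by auto
qed

lemma multicycle_of_blocks:
  fixes blk :: "'j \<Rightarrow> ('s, 'p) edge list list"
  assumes "finite G" "\<forall>J\<in>G. is_multicycle S E (blk J)"
  shows "\<exists>\<Theta>'. is_multicycle S E \<Theta>' \<and> (\<forall>p. delta_mc \<Theta>' p = (\<Sum>J\<in>G. delta_mc (blk J) p)) \<and>
           (\<forall>e. mc_parikh \<Theta>' e = (\<Sum>J\<in>G. mc_parikh (blk J) e)) \<and>
           mc_length \<Theta>' = (\<Sum>J\<in>G. mc_length (blk J))"
proof -
  obtain gs where gs: "set gs = G" "distinct gs" using finite_distinct_list[OF assms(1)] by blast
  with assms(2) show ?thesis
    by (intro exI[of _ "concat (map blk gs)"])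
      (auto simp: is_multicycle_def delta_mc_concat mc_parikh_concat mc_length_concat
        sum_list_distinct_conv_sum_set comp_def)
qed

lemma good_multicycle_from_blocks:
  fixes blk :: "'j \<Rightarrow> ('s, 'p::finite) edge list list"
  assumes petri: "petri_cs S T E" and pos: "norm_inf T > 0" and fin: "finite \<J>"
    and sum_delta: "\<forall>p. (\<Sum>J\<in>\<J>. delta_mc (blk J) p) = delta_mc \<Theta> p"
    and sum_parikh: "\<forall>e. (\<Sum>J\<in>\<J>. mc_parikh (blk J) e) = mc_parikh \<Theta> e"
    and blocks: "\<forall>J\<in>\<J>. is_multicycle S E (blk J) \<and> mc_length (blk J) * norm_inf T \<le> X \<and>
                       sign_compatible (delta_mc (blk J)) (delta_mc \<Theta>)"
    and k: "norm1_restr (delta_mc \<Theta>) Q * int X < int k"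
  shows "\<exists>\<Theta>'. is_multicycle S E \<Theta>' \<and>
    (\<forall>p. (delta_mc \<Theta> p \<le> 0 \<longrightarrow> delta_mc \<Theta>' p \<le> 0) \<and>
         (delta_mc \<Theta> p \<le> - int k \<longrightarrow> delta_mc \<Theta>' p < 0) \<and>
         (delta_mc \<Theta> p \<ge> 0 \<longrightarrow> delta_mc \<Theta>' p \<ge> 0) \<and>
         (delta_mc \<Theta> p \<ge> int k \<longrightarrow> delta_mc \<Theta>' p > 0)) \<and>
    (\<forall>q\<in>Q. delta_mc \<Theta>' q = 0) \<and>
    (\<forall>e\<in>E. mc_parikh \<Theta> e \<ge> k \<longrightarrow> mc_parikh \<Theta>' e > 0) \<and>
    mc_length \<Theta>' \<le> (card E + CARD('p)) * X"
proof -
  define s where "s = delta_mc \<Theta>"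
  have "0 \<le> norm1_restr s Q * int X" by (simp add: norm1_restr_def sum_nonneg)
  with k have k_pos: "0 < int k" by (simp add: s_def)
  have length_le: "mc_length (blk J) \<le> X" if "J \<in> \<J>" for J
  proof -
    have "mc_length (blk J) \<le> mc_length (blk J) * norm_inf T" using pos by simp
    with blocks that show ?thesis by (meson order.trans)
  qed
  have "finite E" using petri by (auto simp: petri_cs_def intro: finite_subset)
  moreover have "\<forall>J\<in>\<J>. \<forall>p. \<bar>delta_mc (blk J) p\<bar> \<le> int X"
    using blocks abs_delta_mc_le[OF petri] by (metis of_nat_le_iff order.trans)
  moreover have "\<forall>J\<in>\<J>. \<forall>e. mc_parikh (blk J) e \<le> X"
    using length_le mc_parikh_le_mc_length order.trans by blast
  ultimately obtain G where G: "G \<subseteq> \<J>" "card G \<le> card E + CARD('p)"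
    and zero_Q: "\<forall>J\<in>G. \<forall>q\<in>Q. delta_mc (blk J) q = 0"
    and places: "\<forall>p. int k \<le> \<bar>s p\<bar> \<longrightarrow> (\<exists>J\<in>G. 0 < sgn (s p) * delta_mc (blk J) p)"
    and edges: "\<forall>e\<in>E. k \<le> mc_parikh \<Theta> e \<longrightarrow> (\<exists>J\<in>G. 0 < mc_parikh (blk J) e)"
    using exists_few_good_blocks[OF fin, of E "\<lambda>J. delta_mc (blk J)" s X "\<lambda>J. mc_parikh (blk J)" Q k]
      blocks sum_delta sum_parikh k unfolding s_def by auto
  have fin_G: "finite G" using G(1) fin finite_subset by blast
  obtain \<Theta>' where \<Theta>': "is_multicycle S E \<Theta>'" "\<forall>p. delta_mc \<Theta>' p = (\<Sum>J\<in>G. delta_mc (blk J) p)"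
    "\<forall>e. mc_parikh \<Theta>' e = (\<Sum>J\<in>G. mc_parikh (blk J) e)" "mc_length \<Theta>' = (\<Sum>J\<in>G. mc_length (blk J))"
    using multicycle_of_blocks[OF fin_G, where blk = blk] G(1) blocks by blast
  have "\<forall>J\<in>G. sign_compatible (delta_mc (blk J)) s" using G(1) blocks by (auto simp: s_def)
  from sign_pattern_of_sum[where w = "\<lambda>J. delta_mc (blk J)", OF fin_G this k_pos places]
  have "(s p \<le> 0 \<longrightarrow> delta_mc \<Theta>' p \<le> 0) \<and> (s p \<le> - int k \<longrightarrow> delta_mc \<Theta>' p < 0) \<and>
        (0 \<le> s p \<longrightarrow> 0 \<le> delta_mc \<Theta>' p) \<and> (int k \<le> s p \<longrightarrow> 0 < delta_mc \<Theta>' p)" for p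
    by (simp add: \<Theta>'(2))
  moreover have "\<forall>q\<in>Q. delta_mc \<Theta>' q = 0" using zero_Q by (simp add: \<Theta>'(2))
  moreover have "0 < mc_parikh \<Theta>' e" if e_big: "e \<in> E" "k \<le> mc_parikh \<Theta> e" for e
  proof -
    obtain J0 where "J0 \<in> G" "0 < mc_parikh (blk J0) e" using edges e_big by blast
    then show ?thesis
      using member_le_sum[OF _ _ fin_G, of J0 "\<lambda>J. mc_parikh (blk J) e"] by (simp add: \<Theta>'(3))
  qed
  moreover have "mc_length \<Theta>' \<le> (card E + CARD('p)) * X"
  proof -
    have "mc_length \<Theta>' \<le> card G * X"
      using G(1) length_le sum_bounded_above[of G _ X] by (auto simp: \<Theta>'(4) subset_iff)
    also have "\<dots> \<le> (card E + CARD('p)) * X" using G(2) by simp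
    finally show ?thesis .
  qed
  ultimately show ?thesis using \<Theta>'(1) unfolding s_def by blast
qed

lemma steinitz_bound_mult_le:
  fixes d M :: nat
  assumes "1 \<le> d" "1 \<le> M"
  shows "(2 * d * M + 1) ^ d * M \<le> (1 + 2 * M) ^ (d * (d + 1))"
proof -
  define n where "n = 1 + 2 * M"
  have n3: "3 \<le> n" using assms by (simp add: n_def)
  have "d \<le> 2 ^ (d - 1)" using less_exp[of "d - 1"] assms(1) by linarith
  also have "\<dots> \<le> n ^ (d - 1)" using n3 by (intro power_mono) auto
  finally have "d * n \<le> n ^ (d - 1) * n" by (rule mult_le_mono1)
  also have "\<dots> = n ^ d" using assms(1) by (cases d) (simp_all add: power_Suc2)
  finally have "d * n \<le> n ^ d" .
  moreover have "2 * d * M + 1 \<le> d * n" using assms by (simp add: n_def algebra_simps)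
  ultimately have "2 * d * M + 1 \<le> n ^ d" by linarith
  then have "(2 * d * M + 1) ^ d * M \<le> (n ^ d) ^ d * n"
    by (intro mult_le_mono power_mono) (auto simp: n_def)
  also have "\<dots> = n ^ (d * d + 1)" by (simp add: power_mult power_add)
  also have "\<dots> \<le> n ^ (d * (d + 1))" using n3 assms by (intro power_increasing) (auto simp: algebra_simps)
  finally show ?thesis by (simp add: n_def)
qed

theorem lemma7p3:
  fixes S :: "'s set" and T :: "'p::finite transition set" and E :: "('s, 'p) edge set"
    and \<Theta> :: "('s, 'p) edge list list" and Q :: "'p set" and k :: nat
  assumes "petri_cs S T E"
    and "norm_inf T > 0"
    and "is_multicycle S E \<Theta>"
    and "int k > norm1_restr (delta_mc \<Theta>) Q
                  * (1 + 2 * int (card S) * int (norm_inf T)) ^ (CARD('p) * (CARD('p) + 1))"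
  shows "\<exists>\<Theta>'. is_multicycle S E \<Theta>' \<and>
    (\<forall>p. (delta_mc \<Theta> p \<le> 0 \<longrightarrow> delta_mc \<Theta>' p \<le> 0) \<and>
         (delta_mc \<Theta> p \<le> - int k \<longrightarrow> delta_mc \<Theta>' p < 0) \<and>
         (delta_mc \<Theta> p \<ge> 0 \<longrightarrow> delta_mc \<Theta>' p \<ge> 0) \<and>
         (delta_mc \<Theta> p \<ge> int k \<longrightarrow> delta_mc \<Theta>' p > 0)) \<and>
    (\<forall>q\<in>Q. delta_mc \<Theta>' q = 0) \<and>
    (\<forall>e\<in>E. mc_parikh \<Theta> e \<ge> k \<longrightarrow> mc_parikh \<Theta>' e > 0) \<and>
    mc_length \<Theta>' \<le> (card E + CARD('p)) * (1 + 2 * card S * norm_inf T) ^ (CARD('p) * (CARD('p) + 1))"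
proof -
  define K X where "K = (2 * CARD('p) * (card S * norm_inf T) + 1) ^ CARD('p)"
    and "X = (1 + 2 * card S * norm_inf T) ^ (CARD('p) * (CARD('p) + 1))"
  obtain \<P> :: "nat set set" and blk where \<P>: "finite \<P>"
    "\<forall>p. (\<Sum>J\<in>\<P>. delta_mc (blk J) p) = delta_mc \<Theta> p"
    "\<forall>e. (\<Sum>J\<in>\<P>. mc_parikh (blk J) e) = mc_parikh \<Theta> e"
    and blocks: "\<forall>J\<in>\<P>. is_multicycle S E (blk J) \<and> mc_length (blk J) \<le> K * card S \<and>
                        sign_compatible (delta_mc (blk J)) (delta_mc \<Theta>)"
    using multicycle_sign_compatible_blocks[OF assms(1-3)] unfolding K_def by blast
  have "1 \<le> card S" "1 \<le> norm_inf T"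
    using assms(1,2) by (auto simp: petri_cs_def Suc_le_eq card_gt_0_iff)
  then have "K * card S * norm_inf T \<le> X"
    using steinitz_bound_mult_le[of "CARD('p)" "card S * norm_inf T"]
    by (simp add: K_def X_def mult.assoc)
  then have "\<forall>J\<in>\<P>. is_multicycle S E (blk J) \<and> mc_length (blk J) * norm_inf T \<le> X \<and>
      sign_compatible (delta_mc (blk J)) (delta_mc \<Theta>)"
    using blocks by (meson mult_le_mono1 order.trans)
  moreover have "norm1_restr (delta_mc \<Theta>) Q * int X < int k" using assms(4) by (simp add: X_def)
  ultimately show ?thesis
    using good_multicycle_from_blocks[OF assms(1,2) \<P>] unfolding X_def by blast
qed

end
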